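(* Let $(V,g)$ be a Euclidean vector space and $\mathfrak{g}\subseteq\mathfrak{so}(V)$ a Lie subalgebra. Let $V=V_0\oplus\bigoplus_{k=1}^dV_k$ be an orthogonal decomposition where $\mathfrak{g}$ acts trivially on $V_0$ and irreducibly on each $V_k$, $1\le k\le d$. For each $k$ let $\hat V_k=\bigoplus_{j\neq k,\,1\le j\le d}V_j$ and let $\hat{\mathfrak{g}}_k\subseteq\mathfrak{g}$ be the ideal consisting of elements of $\mathfrak{g}$ acting trivially on $\hat V_k$ (regarded as a subalgebra of $\mathfrak{so}(V_k)$). Then $$\Lambda^3V\cap(\Lambda^1V\otimes\mathfrak{g})=\bigoplus_{k=1}^d\Lambda^3V_k\cap(\Lambda^1V_k\otimes\hat{\mathfrak{g}}_k).$$
   Context: $\Lambda^2V$ is identified with $\mathfrak{so}(V)$ via $F\mapsto g(F\cdot,\cdot)$; $\Lambda^3W\cap(\Lambda^1W\otimes\mathfrak{h})=\{T\in\Lambda^3W:X\lrcorner T\in\mathfrak{h}\ \forall X\in W\}$. *)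

theory Defs
  imports "HOL-Analysis.Analysis"
begin

text \<open>The Euclidean vector space (V,g) is a type 'v :: euclidean_space with its inner product.
  Elements of so(V): linear maps that are skew-adjoint.\<close>

definition skew_endo :: "('v::euclidean_space \<Rightarrow> 'v) \<Rightarrow> bool" where
  "skew_endo F \<longleftrightarrow> linear F \<and> (\<forall>x y. inner (F x) y = - inner x (F y))"

definition lie_subalgebra_so :: "('v::euclidean_space \<Rightarrow> 'v) set \<Rightarrow> bool" where
  "lie_subalgebra_so G \<longleftrightarrow>
     (\<forall>F\<in>G. skew_endo F) \<and> (\<lambda>x. 0) \<in> G \<and>
     (\<forall>F\<in>G. \<forall>H\<in>G. (\<lambda>x. F x + H x) \<in> G) \<and>
     (\<forall>c. \<forall>F\<in>G. (\<lambda>x. c *\<^sub>R F x) \<in> G) \<and>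
     (\<forall>F\<in>G. \<forall>H\<in>G. (\<lambda>x. F (H x) - H (F x)) \<in> G)"

definition acts_trivially :: "('v::euclidean_space \<Rightarrow> 'v) set \<Rightarrow> 'v set \<Rightarrow> bool" where
  "acts_trivially G W \<longleftrightarrow> (\<forall>F\<in>G. \<forall>x\<in>W. F x = 0)"

definition invariant_subspace :: "('v::euclidean_space \<Rightarrow> 'v) set \<Rightarrow> 'v set \<Rightarrow> bool" where
  "invariant_subspace G W \<longleftrightarrow> subspace W \<and> (\<forall>F\<in>G. F ` W \<subseteq> W)"

definition acts_irreducibly :: "('v::euclidean_space \<Rightarrow> 'v) set \<Rightarrow> 'v set \<Rightarrow> bool" where
  "acts_irreducibly G W \<longleftrightarrow> invariant_subspace G W \<and> W \<noteq> {0} \<and>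
     (\<forall>U. invariant_subspace G U \<and> U \<subseteq> W \<longrightarrow> U = {0} \<or> U = W)"

text \<open>Lambda^3 V: alternating trilinear forms on V.\<close>

definition alt3 :: "('v::euclidean_space \<Rightarrow> 'v \<Rightarrow> 'v \<Rightarrow> real) \<Rightarrow> bool" where
  "alt3 T \<longleftrightarrow> (\<forall>y z. linear (\<lambda>x. T x y z)) \<and> (\<forall>x z. linear (\<lambda>y. T x y z)) \<and>
     (\<forall>x y. linear (\<lambda>z. T x y z)) \<and>
     (\<forall>x y z. T y x z = - T x y z) \<and> (\<forall>x y z. T x z y = - T x y z)"

text \<open>X \<lrcorner> T, identified with an endomorphism via F \<mapsto> g(F\<cdot>,\<cdot>), lies in G.\<close>

definition contr_in :: "'v \<Rightarrow> ('v::euclidean_space \<Rightarrow> 'v \<Rightarrow> 'v \<Rightarrow> real) \<Rightarrow> ('v \<Rightarrow> 'v) set \<Rightarrow> bool" where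
  "contr_in X T G \<longleftrightarrow> (\<exists>F\<in>G. \<forall>y z. inner (F y) z = T X y z)"

text \<open>Lambda^3 W \<inter> (Lambda^1 W \<otimes> h) for W = V.\<close>

definition L3_cap :: "('v::euclidean_space \<Rightarrow> 'v) set \<Rightarrow> ('v \<Rightarrow> 'v \<Rightarrow> 'v \<Rightarrow> real) set" where
  "L3_cap G = {T. alt3 T \<and> (\<forall>X. contr_in X T G)}"

text \<open>Lambda^3 W, for a subspace W of V, embedded in Lambda^3 V: alternating trilinear forms on V
  vanishing as soon as one argument is orthogonal to W (equivalently, pullbacks of
  forms on W along the orthogonal projection onto W).\<close>

definition supported_on :: "('v::euclidean_space \<Rightarrow> 'v \<Rightarrow> 'v \<Rightarrow> real) \<Rightarrow> 'v set \<Rightarrow> bool" where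
  "supported_on T W \<longleftrightarrow> (\<forall>x. (\<forall>w\<in>W. inner x w = 0) \<longrightarrow> (\<forall>y z. T x y z = 0))"

definition hatV :: "(nat \<Rightarrow> 'v::euclidean_space set) \<Rightarrow> nat \<Rightarrow> nat \<Rightarrow> 'v set" where
  "hatV Vs d k = span (\<Union>j\<in>{1..d} - {k}. Vs j)"

definition hatg :: "('v::euclidean_space \<Rightarrow> 'v) set \<Rightarrow> (nat \<Rightarrow> 'v set) \<Rightarrow> nat \<Rightarrow> nat \<Rightarrow> ('v \<Rightarrow> 'v) set" where
  "hatg G Vs d k = {F\<in>G. \<forall>x\<in>hatV Vs d k. F x = 0}"

end

theory Submission
  imports Defs
begin

(* Let p k be the orthogonal projection onto V_k, so that
   v = p 0 v + ... + p d v.  For T in Lambda^3 V \<inter> (Lambda^1 V \<otimes> g), every contraction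
   Z \<lrcorner> T is an element F of g, and g preserves every V_i.  Hence for x in V_i,
   y in V_j with i \<noteq> j we get T(x,y,Z) = T(Z,x,y) = g(F x, y) = 0, and T vanishes on V_0
   because g kills V_0.  So T only sees "diagonal" arguments and splits as
   T = \<Sum>_k T_k with T_k = T(p_k., p_k., p_k.), supported on V_k.  Each contraction
   X \<lrcorner> T_k = (p_k X) \<lrcorner> T kills every V_j, j \<noteq> k, so it lies in hat g_k.  Conversely a
   sum of such T_k is alternating with contractions in g (g is closed under sums),
   and the decomposition is unique since T_k is recovered from \<Sum>_j T_j by
   restricting the first argument to V_k. *)

lemma sum_eq_single:
  "finite A \<Longrightarrow> k \<in> A \<Longrightarrow> (\<And>j. j \<in> A \<Longrightarrow> j \<noteq> k \<Longrightarrow> f j = 0) \<Longrightarrow> sum f A = f k"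
  using sum.mono_neutral_right[of A "{k}" f] by auto

section \<open>Orthogonal decompositions and their projections\<close>

text \<open>Pairwise orthogonal subspaces V_0, ..., V_d spanning V, with a choice of components p k v
  of every vector v.  The projections are then forced to be the orthogonal projections.\<close>

locale orthogonal_decomposition =
  fixes Vs :: "nat \<Rightarrow> 'v::euclidean_space set"
    and d :: nat
    and p :: "nat \<Rightarrow> 'v \<Rightarrow> 'v"
  assumes component_subspace: "k \<le> d \<Longrightarrow> subspace (Vs k)"
    and components_orthogonal:
      "i \<le> d \<Longrightarrow> j \<le> d \<Longrightarrow> i \<noteq> j \<Longrightarrow> x \<in> Vs i \<Longrightarrow> y \<in> Vs j \<Longrightarrow> inner x y = 0"
    and proj_in: "k \<le> d \<Longrightarrow> p k v \<in> Vs k"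
    and proj_sum: "v = (\<Sum>k\<le>d. p k v)"
begin

text \<open>The components of a vector are unique: a sum of mutually orthogonal vectors vanishes
  only if each summand does.\<close>

lemma decomposition_unique:
  assumes a: "\<And>j. j \<le> d \<Longrightarrow> a j \<in> Vs j" and b: "\<And>j. j \<le> d \<Longrightarrow> b j \<in> Vs j"
    and sums: "(\<Sum>j\<le>d. a j) = (\<Sum>j\<le>d. b j)" and k: "k \<le> d"
  shows "a k = b k"
proof -
  define c where "c j = a j - b j" for j
  have c: "j \<le> d \<Longrightarrow> c j \<in> Vs j" for j
    using a b component_subspace by (simp add: c_def subspace_diff)
  have "0 = inner (\<Sum>j\<le>d. c j) (c k)"
    using sums by (simp add: c_def sum_subtractf)
  also have "\<dots> = (\<Sum>j\<le>d. inner (c j) (c k))" by (simp add: inner_sum_left)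
  also have "\<dots> = inner (c k) (c k)"
    by (rule sum_eq_single) (use k c components_orthogonal in auto)
  finally show ?thesis by (simp add: c_def)
qed

lemma proj_linear:
  assumes k: "k \<le> d" shows "linear (p k)"
proof (rule linearI)
  fix x y :: 'v and c :: real
  have add: "(\<Sum>j\<le>d. p j (x + y)) = (\<Sum>j\<le>d. p j x + p j y)"
    using proj_sum[of "x + y"] proj_sum[of x] proj_sum[of y] by (simp add: sum.distrib)
  show "p k (x + y) = p k x + p k y"
    by (rule decomposition_unique[OF proj_in _ add k]) (auto intro: subspace_add component_subspace proj_in)
  have scale: "(\<Sum>j\<le>d. p j (c *\<^sub>R x)) = (\<Sum>j\<le>d. c *\<^sub>R p j x)"
    using proj_sum[of "c *\<^sub>R x"] proj_sum[of x] by (metis scaleR_sum_right)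
  show "p k (c *\<^sub>R x) = c *\<^sub>R p k x"
    by (rule decomposition_unique[OF proj_in _ scale k]) (auto intro: subspace_scale component_subspace proj_in)
qed

lemma proj_orthogonal_zero:
  assumes k: "k \<le> d" and x: "\<forall>w\<in>Vs k. inner x w = 0"
  shows "p k x = 0"
proof -
  have "0 = inner x (p k x)" using x proj_in k by simp
  also have "\<dots> = (\<Sum>j\<le>d. inner (p j x) (p k x))"
    by (subst (1) proj_sum[of x]) (simp add: inner_sum_left)
  also have "\<dots> = inner (p k x) (p k x)"
    by (rule sum_eq_single) (use k proj_in components_orthogonal in auto)
  finally show ?thesis by simp
qed

lemma linear_only_component:
  assumes f: "linear f" and k: "k \<le> d"
    and kills: "\<And>j. j \<le> d \<Longrightarrow> j \<noteq> k \<Longrightarrow> f (p j y) = 0"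
  shows "f y = f (p k y)"
proof -
  have "f y = (\<Sum>j\<le>d. f (p j y))"
    by (subst proj_sum[of y]) (simp add: linear_sum[OF f])
  also have "\<dots> = f (p k y)"
    by (rule sum_eq_single) (use kills k in auto)
  finally show ?thesis .
qed

end

section \<open>Alternating trilinear forms\<close>

lemma alt3_swap12: "alt3 T \<Longrightarrow> T y x z = - T x y z" unfolding alt3_def by blast
lemma alt3_swap23: "alt3 T \<Longrightarrow> T x z y = - T x y z" unfolding alt3_def by blast

lemma alt3_cyclic: "alt3 T \<Longrightarrow> T z x y = T x y z"
  using alt3_swap12[of T x z y] alt3_swap23[of T x y z] by simp

lemma alt3_linear1: "alt3 T \<Longrightarrow> linear (\<lambda>x. T x y z)" unfolding alt3_def by blast
lemma alt3_linear2: "alt3 T \<Longrightarrow> linear (\<lambda>y. T x y z)" unfolding alt3_def by blast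
lemma alt3_linear3: "alt3 T \<Longrightarrow> linear (\<lambda>z. T x y z)" unfolding alt3_def by blast

lemma alt3_sum:
  assumes "finite S" and alt: "\<And>k. k \<in> S \<Longrightarrow> alt3 (Ts k)"
  shows "alt3 (\<lambda>x y z. \<Sum>k\<in>S. Ts k x y z)"
  unfolding alt3_def
proof (intro conjI allI)
  fix x y z
  show "linear (\<lambda>x. \<Sum>k\<in>S. Ts k x y z)"
    by (rule linear_compose_sum) (use alt alt3_linear1 in blast)
  show "linear (\<lambda>y. \<Sum>k\<in>S. Ts k x y z)"
    by (rule linear_compose_sum) (use alt alt3_linear2 in blast)
  show "linear (\<lambda>z. \<Sum>k\<in>S. Ts k x y z)"
    by (rule linear_compose_sum) (use alt alt3_linear3 in blast)
  show "(\<Sum>k\<in>S. Ts k y x z) = - (\<Sum>k\<in>S. Ts k x y z)"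
    unfolding sum_negf[symmetric] by (rule sum.cong) (use alt alt3_swap12 in blast)+
  show "(\<Sum>k\<in>S. Ts k x z y) = - (\<Sum>k\<in>S. Ts k x y z)"
    unfolding sum_negf[symmetric] by (rule sum.cong) (use alt alt3_swap23 in blast)+
qed

lemma alt3_pullback:
  assumes T: "alt3 T" and f: "linear f"
  shows "alt3 (\<lambda>x y z. T (f x) (f y) (f z))"
  unfolding alt3_def
proof (intro conjI allI)
  fix x y z
  show "linear (\<lambda>x. T (f x) (f y) (f z))"
    using linear_compose[OF f alt3_linear1[OF T]] by (simp add: o_def)
  show "linear (\<lambda>y. T (f x) (f y) (f z))"
    using linear_compose[OF f alt3_linear2[OF T]] by (simp add: o_def)
  show "linear (\<lambda>z. T (f x) (f y) (f z))"
    using linear_compose[OF f alt3_linear3[OF T]] by (simp add: o_def)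
  show "T (f y) (f x) (f z) = - T (f x) (f y) (f z)" by (rule alt3_swap12[OF T])
  show "T (f x) (f z) (f y) = - T (f x) (f y) (f z)" by (rule alt3_swap23[OF T])
qed

section \<open>Lie subalgebras and contractions\<close>

lemma lie_subalgebra_linear: "lie_subalgebra_so G \<Longrightarrow> F \<in> G \<Longrightarrow> linear F"
  by (auto simp: lie_subalgebra_so_def skew_endo_def)

lemma lie_subalgebra_sum:
  assumes lie: "lie_subalgebra_so G"
  shows "finite S \<Longrightarrow> (\<And>k. k \<in> S \<Longrightarrow> f k \<in> G) \<Longrightarrow> (\<lambda>x. \<Sum>k\<in>S. f k x) \<in> G"
proof (induction S rule: finite_induct)
  case empty then show ?case using lie by (simp add: lie_subalgebra_so_def)
next
  case (insert a S) then show ?case using lie unfolding lie_subalgebra_so_def by simp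
qed

lemma L3_cap_contraction:
  assumes "T \<in> L3_cap G"
  obtains F where "F \<in> G" "\<And>a b. inner (F a) b = T Z a b"
  using assms unfolding L3_cap_def contr_in_def by blast

lemma L3_cap_sum:
  assumes lie: "lie_subalgebra_so G" and "finite S"
    and sub: "\<And>k. k \<in> S \<Longrightarrow> H k \<subseteq> G" and Ts: "\<And>k. k \<in> S \<Longrightarrow> Ts k \<in> L3_cap (H k)"
  shows "(\<lambda>x y z. \<Sum>k\<in>S. Ts k x y z) \<in> L3_cap G"
proof -
  have "alt3 (\<lambda>x y z. \<Sum>k\<in>S. Ts k x y z)"
    by (rule alt3_sum[OF \<open>finite S\<close>]) (use Ts in \<open>simp add: L3_cap_def\<close>)
  moreover have "contr_in X (\<lambda>x y z. \<Sum>k\<in>S. Ts k x y z) G" for X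
  proof -
    have "\<forall>k\<in>S. \<exists>F. F \<in> H k \<and> (\<forall>y z. inner (F y) z = Ts k X y z)"
      using Ts unfolding L3_cap_def contr_in_def by blast
    then obtain F where F: "\<And>k. k \<in> S \<Longrightarrow> F k \<in> H k \<and> (\<forall>y z. inner (F k y) z = Ts k X y z)"
      by metis
    have "(\<lambda>x. \<Sum>k\<in>S. F k x) \<in> G"
      by (rule lie_subalgebra_sum[OF lie \<open>finite S\<close>]) (use F sub in blast)
    moreover have "inner (\<Sum>k\<in>S. F k y) z = (\<Sum>k\<in>S. Ts k X y z)" for y z
      using F by (simp add: inner_sum_left)
    ultimately show ?thesis
      unfolding contr_in_def by (intro bexI[of _ "\<lambda>x. \<Sum>k\<in>S. F k x"]) simp_all
  qed
  ultimately show ?thesis by (simp add: L3_cap_def)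
qed

section \<open>Splitting along a decomposition into invariant subspaces\<close>

context orthogonal_decomposition
begin

text \<open>Uniqueness of the splitting: forms supported on the mutually orthogonal V_k are
  recovered from their sum by restricting the first argument to V_k.\<close>

lemma supported_sum_zero:
  assumes alt: "\<And>k. k \<in> {1..d} \<Longrightarrow> alt3 (Ts k)"
    and supp: "\<And>k. k \<in> {1..d} \<Longrightarrow> supported_on (Ts k) (Vs k)"
    and zero: "(\<lambda>x y z. \<Sum>k\<in>{1..d}. Ts k x y z) = (\<lambda>x y z. 0)"
    and k: "k \<in> {1..d}"
  shows "Ts k = (\<lambda>x y z. 0)"
proof (intro ext)
  fix x y z
  have kd: "k \<le> d" using k by auto
  have orth: "j \<le> d \<Longrightarrow> j \<noteq> i \<Longrightarrow> i \<le> d \<Longrightarrow> \<forall>w\<in>Vs i. inner (p j x) w = 0" for i j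
    using components_orthogonal proj_in by blast
  have "Ts k x y z = Ts k (p k x) y z"
    by (rule linear_only_component[OF alt3_linear1[OF alt[OF k]] kd])
       (use orth kd supp[OF k] in \<open>auto simp: supported_on_def\<close>)
  also have "\<dots> = (\<Sum>i\<in>{1..d}. Ts i (p k x) y z)"
  proof (rule sum_eq_single[symmetric])
    fix i assume "i \<in> {1..d}" "i \<noteq> k"
    then show "Ts i (p k x) y z = 0"
      using orth[of k i] supp[of i] kd by (auto simp: supported_on_def)
  qed (use k in auto)
  also have "\<dots> = 0" using fun_cong[OF fun_cong[OF fun_cong[OF zero]]] by simp
  finally show "Ts k x y z = 0" .
qed

end

text \<open>An orthogonal decomposition into G-invariant subspaces, G acting trivially on V_0.\<close>

locale invariant_decomposition = orthogonal_decomposition Vs d p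
  for Vs :: "nat \<Rightarrow> 'v::euclidean_space set" and d p +
  fixes G :: "('v \<Rightarrow> 'v) set"
  assumes lie: "lie_subalgebra_so G"
    and invariant: "i \<le> d \<Longrightarrow> F \<in> G \<Longrightarrow> x \<in> Vs i \<Longrightarrow> F x \<in> Vs i"
    and trivial0: "F \<in> G \<Longrightarrow> x \<in> Vs 0 \<Longrightarrow> F x = 0"
begin

lemma L3_cap_vanishes_V0:
  assumes T: "T \<in> L3_cap G" and x: "x \<in> Vs 0"
  shows "T x y z = 0"
proof -
  obtain F where F: "F \<in> G" "\<And>a b. inner (F a) b = T y a b"
    using L3_cap_contraction[OF T] by blast
  have "T y x z = 0" using F(2)[of x z] trivial0[OF F(1) x] by simp
  then show ?thesis using T alt3_swap12[of T x y z] by (simp add: L3_cap_def)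
qed

text \<open>... and on pairs of arguments from different components: T(x,y,Z) = g(F x, y) with
  F = Z \<lrcorner> T \<in> G, and F x stays in the component of x.\<close>

lemma L3_cap_vanishes_mixed:
  assumes T: "T \<in> L3_cap G" and x: "x \<in> Vs i" and y: "y \<in> Vs j"
    and ij: "i \<le> d" "j \<le> d" "i \<noteq> j"
  shows "T x y z = 0"
proof -
  obtain F where F: "F \<in> G" "\<And>a b. inner (F a) b = T z a b"
    using L3_cap_contraction[OF T] by blast
  have "inner (F x) y = 0"
    using components_orthogonal[OF ij invariant[OF ij(1) F(1) x] y] .
  then show ?thesis using F(2) alt3_cyclic[of T z x y] T by (simp add: L3_cap_def)
qed

lemma L3_cap_restrict:
  assumes T: "T \<in> L3_cap G" and a: "a \<in> Vs k" and k: "k \<le> d"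
  shows "T a y z = T a (p k y) (p k z)"
proof -
  have alt: "alt3 T" using T by (simp add: L3_cap_def)
  have "T a y z = T a (p k y) z"
    by (rule linear_only_component[OF alt3_linear2[OF alt] k])
       (use L3_cap_vanishes_mixed[OF T a proj_in] k in auto)
  also have "\<dots> = T a (p k y) (p k z)"
    by (rule linear_only_component[OF alt3_linear3[OF alt] k])
       (use L3_cap_vanishes_mixed[OF T a proj_in] k alt3_swap23[OF alt] in \<open>metis neg_equal_0_iff_equal\<close>)
  finally show ?thesis .
qed

definition block :: "('v \<Rightarrow> 'v \<Rightarrow> 'v \<Rightarrow> real) \<Rightarrow> nat \<Rightarrow> 'v \<Rightarrow> 'v \<Rightarrow> 'v \<Rightarrow> real" where
  "block T k = (\<lambda>x y z. T (p k x) (p k y) (p k z))"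

lemma L3_cap_sum_blocks:
  assumes T: "T \<in> L3_cap G"
  shows "T = (\<lambda>x y z. \<Sum>k\<in>{1..d}. block T k x y z)"
proof (intro ext)
  fix x y z
  have alt: "alt3 T" using T by (simp add: L3_cap_def)
  have "T x y z = (\<Sum>k\<le>d. T (p k x) y z)"
    by (subst proj_sum[of x]) (simp add: linear_sum[OF alt3_linear1[OF alt]])
  also have "\<dots> = (\<Sum>k\<le>d. block T k x y z)"
    by (rule sum.cong) (auto simp: block_def intro: L3_cap_restrict[OF T proj_in])
  also have "\<dots> = (\<Sum>k\<in>insert 0 {1..d}. block T k x y z)"
    by (rule sum.cong) auto
  also have "\<dots> = (\<Sum>k\<in>{1..d}. block T k x y z)"
    using L3_cap_vanishes_V0[OF T proj_in[of 0]] by (simp add: block_def)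
  finally show "T x y z = (\<Sum>k\<in>{1..d}. block T k x y z)" .
qed

lemma block_supported:
  assumes T: "T \<in> L3_cap G" and k: "k \<le> d"
  shows "supported_on (block T k) (Vs k)"
  using proj_orthogonal_zero[OF k] linear_0[OF alt3_linear1] T
  by (auto simp: supported_on_def block_def L3_cap_def)

text \<open>The contractions of the k-th block are contractions of T by vectors of V_k, and these
  kill every V_j with j \<noteq> k, hence lie in hat g_k.\<close>

lemma block_L3_cap:
  assumes T: "T \<in> L3_cap G" and k: "k \<in> {1..d}"
  shows "block T k \<in> L3_cap (hatg G Vs d k)"
proof -
  have kd: "k \<le> d" using k by auto
  have "alt3 (block T k)"
    unfolding block_def
    by (rule alt3_pullback[OF _ proj_linear[OF kd]]) (use T in \<open>simp add: L3_cap_def\<close>)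
  moreover have "contr_in X (block T k) (hatg G Vs d k)" for X
  proof -
    obtain F where F: "F \<in> G" "\<And>a b. inner (F a) b = T (p k X) a b"
      using L3_cap_contraction[OF T] by blast
    have "F x = 0" if "x \<in> Vs j" "j \<in> {1..d} - {k}" for x j
      using F(2)[of x "F x"] L3_cap_vanishes_mixed[OF T proj_in[OF kd] that(1)] that(2) kd by auto
    then have "hatV Vs d k \<subseteq> {x. F x = 0}"
      unfolding hatV_def
      by (intro span_minimal linear_subspace_kernel lie_subalgebra_linear[OF lie F(1)]) blast
    then have "F \<in> hatg G Vs d k" using F(1) by (auto simp: hatg_def)
    moreover have "inner (F y) z = block T k X y z" for y z
      using F(2) L3_cap_restrict[OF T proj_in[OF kd] kd] by (simp add: block_def)
    ultimately show ?thesis by (auto simp: contr_in_def)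
  qed
  ultimately show ?thesis by (simp add: L3_cap_def)
qed

lemma L3_cap_splits:
  "L3_cap G = {(\<lambda>x y z. \<Sum>k\<in>{1..d}. Ts k x y z) | Ts.
     \<forall>k\<in>{1..d}. Ts k \<in> L3_cap (hatg G Vs d k) \<and> supported_on (Ts k) (Vs k)}"
proof (intro equalityI subsetI)
  fix T assume T: "T \<in> L3_cap G"
  show "T \<in> {(\<lambda>x y z. \<Sum>k\<in>{1..d}. Ts k x y z) | Ts.
     \<forall>k\<in>{1..d}. Ts k \<in> L3_cap (hatg G Vs d k) \<and> supported_on (Ts k) (Vs k)}"
  proof (intro CollectI exI[of _ "block T"] conjI ballI)
    show "T = (\<lambda>x y z. \<Sum>k\<in>{1..d}. block T k x y z)" by (rule L3_cap_sum_blocks[OF T])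
    fix k assume "k \<in> {1..d}"
    then show "block T k \<in> L3_cap (hatg G Vs d k)" "supported_on (block T k) (Vs k)"
      using block_L3_cap[OF T] block_supported[OF T] by auto
  qed
next
  fix T assume "T \<in> {(\<lambda>x y z. \<Sum>k\<in>{1..d}. Ts k x y z) | Ts.
     \<forall>k\<in>{1..d}. Ts k \<in> L3_cap (hatg G Vs d k) \<and> supported_on (Ts k) (Vs k)}"
  then obtain Ts where T: "T = (\<lambda>x y z. \<Sum>k\<in>{1..d}. Ts k x y z)"
      and Ts: "\<forall>k\<in>{1..d}. Ts k \<in> L3_cap (hatg G Vs d k)"
    by blast
  have "(\<lambda>x y z. \<Sum>k\<in>{1..d}. Ts k x y z) \<in> L3_cap G"
    by (rule L3_cap_sum[OF lie, where H="hatg G Vs d"]) (use Ts in \<open>auto simp: hatg_def\<close>)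
  then show "T \<in> L3_cap G" using T by simp
qed

end

theorem proposition3p1:
  fixes G :: "('v::euclidean_space \<Rightarrow> 'v) set"
    and Vs :: "nat \<Rightarrow> 'v set"
    and d :: nat
  assumes lie: "lie_subalgebra_so G"
    and subsp: "\<forall>k\<le>d. subspace (Vs k)"
    and orth: "\<forall>i\<le>d. \<forall>j\<le>d. i \<noteq> j \<longrightarrow> (\<forall>x\<in>Vs i. \<forall>y\<in>Vs j. inner x y = 0)"
    and spans: "\<forall>v. \<exists>xs. (\<forall>k\<le>d. xs k \<in> Vs k) \<and> v = (\<Sum>k\<le>d. xs k)"
    and triv0: "acts_trivially G (Vs 0)"
    and irr: "\<forall>k\<in>{1..d}. acts_irreducibly G (Vs k)"
  shows "L3_cap G =
           {(\<lambda>x y z. \<Sum>k\<in>{1..d}. Ts k x y z) | Ts.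
              \<forall>k\<in>{1..d}. Ts k \<in> L3_cap (hatg G Vs d k) \<and> supported_on (Ts k) (Vs k)}
       \<and> (\<forall>Ts. (\<forall>k\<in>{1..d}. Ts k \<in> L3_cap (hatg G Vs d k) \<and> supported_on (Ts k) (Vs k))
              \<and> (\<lambda>x y z. \<Sum>k\<in>{1..d}. Ts k x y z) = (\<lambda>x y z. 0)
              \<longrightarrow> (\<forall>k\<in>{1..d}. Ts k = (\<lambda>x y z. 0)))"
proof -
  obtain P where P: "\<And>v. (\<forall>k\<le>d. P v k \<in> Vs k) \<and> v = (\<Sum>k\<le>d. P v k)"
    using spans by metis
  have invariant: "F x \<in> Vs i" if "i \<le> d" "F \<in> G" "x \<in> Vs i" for i F x
  proof (cases "i = 0")
    case True
    then show ?thesis using that triv0 subsp by (auto simp: acts_trivially_def subspace_0)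
  next
    case False
    then have "i \<in> {1..d}" using that(1) by auto
    then have "invariant_subspace G (Vs i)" using irr by (simp add: acts_irreducibly_def)
    then show ?thesis using that by (auto simp: invariant_subspace_def)
  qed
  interpret invariant_decomposition Vs d "\<lambda>k v. P v k" G
    using subsp orth P lie invariant triv0 by unfold_locales (auto simp: acts_trivially_def)
  have unique: "Ts k = (\<lambda>x y z. 0)"
    if "\<forall>k\<in>{1..d}. Ts k \<in> L3_cap (hatg G Vs d k) \<and> supported_on (Ts k) (Vs k)"
      and "(\<lambda>x y z. \<Sum>k\<in>{1..d}. Ts k x y z) = (\<lambda>x y z. 0)" and "k \<in> {1..d}" for Ts k
    using supported_sum_zero[OF _ _ that(2,3)] that(1) by (simp add: L3_cap_def)
  show ?thesis using L3_cap_splits unique by blast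
qed

end
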